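(* If \(A\) is a finite geometrically proper set of positive bump functions in \(\operatorname{Homeo}_+(I)\), then the maximal stretched transition chains of \(A\) (regarded as subsets of \(A\)) partition the set of nonisolated elements of \(A\).
   Context: \(I=[0,1]\). A positive bump is an element of \(\operatorname{Homeo}_+(I)\) whose support \(\{t: ta\neq t\}\) is a single open interval \((x,y)\) on which \(ta>t\); its transition points are \(x\) (left) and \(y\) (right). A transition point of \(A\) is a transition point of some element of \(A\). \(A\) is geometrically proper if no point is a left transition point of two distinct elements of \(A\), nor a right transition point of two distinct elements. An element of \(A\) is isolated if its support contains no transition point of \(A\). A sequence \((a_i\mid i\le k)\) of nonisolated elements of \(A\), with \(\operatorname{supt}(a_i)=(x_i,y_i)\), is a stretched transition chain of \(A\) if (1) for all \(i<k\), \(x_i<x_{i+1}<y_i<y_{i+1}\), and (2) no transition point of \(A\) lies in any interval \((x_{i+1},y_i)\). It is maximal if it is maximal under containment when regarded as a subset of \(A\). *)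

theory Defs
  imports "HOL-Analysis.Analysis" "HOL-Library.Disjoint_Sets"
begin

text \<open>Elements of Homeo_+(I), I = [0,1], are represented by functions real => real
  that restrict to an increasing self-homeomorphism of [0,1] and are the identity outside
  [0,1] (canonical representative, so that distinct elements are distinct functions).
  The paper's right-action notation t a is written a t.\<close>

definition homeo_plus :: "(real \<Rightarrow> real) \<Rightarrow> bool" where
  "homeo_plus a \<longleftrightarrow> (\<exists>g. homeomorphism {0..1} {0..1} a g) \<and> strict_mono_on {0..1} a
     \<and> (\<forall>t. t \<notin> {0..1} \<longrightarrow> a t = t)"

definition supt :: "(real \<Rightarrow> real) \<Rightarrow> real set" where
  "supt a = {t \<in> {0..1}. a t \<noteq> t}"

definition positive_bump :: "(real \<Rightarrow> real) \<Rightarrow> bool" where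
  "positive_bump a \<longleftrightarrow> homeo_plus a \<and>
     (\<exists>x y. x < y \<and> supt a = {x<..<y} \<and> (\<forall>t\<in>{x<..<y}. a t > t))"

definition ltp :: "(real \<Rightarrow> real) \<Rightarrow> real" where "ltp a = Inf (supt a)"
definition rtp :: "(real \<Rightarrow> real) \<Rightarrow> real" where "rtp a = Sup (supt a)"

definition trans_pts :: "(real \<Rightarrow> real) set \<Rightarrow> real set" where
  "trans_pts A = ltp ` A \<union> rtp ` A"

definition geom_proper :: "(real \<Rightarrow> real) set \<Rightarrow> bool" where
  "geom_proper A \<longleftrightarrow> (\<forall>a\<in>A. \<forall>b\<in>A. a \<noteq> b \<longrightarrow> ltp a \<noteq> ltp b \<and> rtp a \<noteq> rtp b)"

definition isolated :: "(real \<Rightarrow> real) set \<Rightarrow> (real \<Rightarrow> real) \<Rightarrow> bool" where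
  "isolated A a \<longleftrightarrow> supt a \<inter> trans_pts A = {}"

definition stc_seq :: "(real \<Rightarrow> real) set \<Rightarrow> (nat \<Rightarrow> real \<Rightarrow> real) \<Rightarrow> nat \<Rightarrow> bool" where
  "stc_seq A c k \<longleftrightarrow>
     (\<forall>i\<le>k. c i \<in> A \<and> \<not> isolated A (c i)) \<and>
     (\<forall>i<k. ltp (c i) < ltp (c (Suc i)) \<and> ltp (c (Suc i)) < rtp (c i)
            \<and> rtp (c i) < rtp (c (Suc i))) \<and>
     (\<forall>i<k. trans_pts A \<inter> {ltp (c (Suc i))<..<rtp (c i)} = {})"

definition stc :: "(real \<Rightarrow> real) set \<Rightarrow> (real \<Rightarrow> real) set \<Rightarrow> bool" where
  "stc A C \<longleftrightarrow> (\<exists>c k. stc_seq A c k \<and> C = c ` {..k})"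

definition maximal_stc :: "(real \<Rightarrow> real) set \<Rightarrow> (real \<Rightarrow> real) set \<Rightarrow> bool" where
  "maximal_stc A C \<longleftrightarrow> stc A C \<and> (\<forall>D. stc A D \<and> C \<subseteq> D \<longrightarrow> D = C)"

end

theory Submission
  imports Defs
begin

text \<open>Consecutive members of a stretched transition chain are related by a link relation which,
  for a geometrically proper set, is injective in both directions: if b and b' both succeed a,
  then neither of ltp b, ltp b' may lie in the gap between the other one and rtp a, so they
  coincide. Hence two chains through a common element agree on their
  overlap and their union is again a chain. Maximal chains are therefore pairwise disjoint, and
  since A is finite, each nonisolated element (a chain of length zero) lies in a maximal one.\<close>

lemma bi_unique_paths_agree:
  assumes R: "bi_unique R"
    and f: "\<And>m. m < n \<Longrightarrow> R (f m) (f (Suc m))"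
    and g: "\<And>m. m < n \<Longrightarrow> R (g m) (g (Suc m))"
    and j: "j \<le> n" "f j = g j"
    and m: "m \<le> n"
  shows "f m = g m"
proof -
  have up: "f (j + t) = g (j + t)" if "j + t \<le> n" for t
    using that
  proof (induction t)
    case (Suc t)
    then show ?case
      using bi_uniqueDr[OF R f[of "j + t"]] g[of "j + t"] by simp
  qed (use j in simp)
  have down: "f (j - t) = g (j - t)" if "t \<le> j" for t
    using that
  proof (induction t)
    case (Suc t)
    then have "Suc (j - Suc t) = j - t" "j - Suc t < n"
      using j by auto
    then show ?case
      using Suc bi_uniqueDl[OF R f[of "j - Suc t"]] g[of "j - Suc t"] by simp
  qed (use j in simp)
  show ?thesis
  proof (cases "m \<le> j")
    case True
    then show ?thesis using down[of "j - m"] by simp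
  next
    case False
    then show ?thesis using up[of "m - j"] m by simp
  qed
qed

definition chain_link :: "(real \<Rightarrow> real) set \<Rightarrow> (real \<Rightarrow> real) \<Rightarrow> (real \<Rightarrow> real) \<Rightarrow> bool" where
  "chain_link A a b \<longleftrightarrow> a \<in> A \<and> b \<in> A \<and> ltp a < ltp b \<and> ltp b < rtp a \<and> rtp a < rtp b
     \<and> trans_pts A \<inter> {ltp b<..<rtp a} = {}"

lemma stc_seq_iff:
  "stc_seq A c k \<longleftrightarrow>
     (\<forall>i\<le>k. c i \<in> A \<and> \<not> isolated A (c i)) \<and> (\<forall>i<k. chain_link A (c i) (c (Suc i)))"
  unfolding stc_seq_def chain_link_def by auto

lemma bi_unique_chain_link:
  assumes "geom_proper A"
  shows "bi_unique (chain_link A)"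
proof (unfold bi_unique_def, intro conjI allI impI)
  fix a b b' assume ab: "chain_link A a b" and ab': "chain_link A a b'"
  then have "ltp b \<in> trans_pts A" "ltp b' \<in> trans_pts A"
    unfolding chain_link_def trans_pts_def by auto
  with ab ab' have "ltp b = ltp b'"
    unfolding chain_link_def by (metis disjoint_iff greaterThanLessThan_iff linorder_neqE_linordered_idom)
  with assms ab ab' show "b = b'"
    unfolding chain_link_def geom_proper_def by metis
next
  fix a a' b assume ab: "chain_link A a b" and a'b: "chain_link A a' b"
  then have "rtp a \<in> trans_pts A" "rtp a' \<in> trans_pts A"
    unfolding chain_link_def trans_pts_def by auto
  with ab a'b have "rtp a = rtp a'"
    unfolding chain_link_def by (metis disjoint_iff greaterThanLessThan_iff linorder_neqE_linordered_idom)
  with assms ab a'b show "a = a'"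
    unfolding chain_link_def geom_proper_def by metis
qed

lemma stc_seq_merge:
  assumes gp: "geom_proper A" and c: "stc_seq A c k" and c': "stc_seq A c' k'"
    and ij: "j \<le> i" "i \<le> k" "j \<le> k'" "c i = c' j"
  shows "stc A (c ` {..k} \<union> c' ` {..k'})"
proof -
  define s where "s = i - j"
  have link: "\<And>m. m < k \<Longrightarrow> chain_link A (c m) (c (Suc m))"
    "\<And>m. m < k' \<Longrightarrow> chain_link A (c' m) (c' (Suc m))"
    using c c' by (auto simp: stc_seq_iff)
  have agree: "c' m = c (m + s)" if "m \<le> k'" "m + s \<le> k" for m
    by (rule bi_unique_paths_agree[OF bi_unique_chain_link[OF gp], where n = "min k' (k - s)"
          and j = j and f = c' and g = "\<lambda>m. c (m + s)"])
      (use link ij that in \<open>auto simp: s_def\<close>)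
  \<comment> \<open>Follow c, then continue along c' shifted by s; the maximum also covers c' inside c.\<close>
  define K where "K = max k (k' + s)"
  define d where "d m = (if m \<le> k then c m else c' (m - s))" for m
  have d_c: "d m = c m" if "m \<le> k" for m
    using that by (simp add: d_def)
  have d_c': "d (m + s) = c' m" if "m \<le> k'" for m
    using agree[OF that] by (simp add: d_def)
  have "stc_seq A d K"
    unfolding stc_seq_iff
  proof (rule conjI; intro allI impI)
    fix m assume m: "m \<le> K"
    show "d m \<in> A \<and> \<not> isolated A (d m)"
    proof (cases "m \<le> k")
      case True
      then show ?thesis using c by (simp add: d_def stc_seq_iff)
    next
      case False
      then have "m - s \<le> k'" using m by (simp add: K_def)
      then show ?thesis using c' False by (simp add: d_def stc_seq_iff)
    qed
  next
    fix m assume m: "m < K"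
    show "chain_link A (d m) (d (Suc m))"
    proof (cases "Suc m \<le> k")
      case True
      then show ?thesis using link(1)[of m] d_c by simp
    next
      case False
      then have "m - s < k'" "m - s + s = m" "Suc (m - s) + s = Suc m"
        using m ij by (auto simp: K_def s_def)
      then show ?thesis using link(2)[of "m - s"] d_c'[of "m - s"] d_c'[of "Suc (m - s)"] by simp
    qed
  qed
  moreover have "d ` {..K} = c ` {..k} \<union> c' ` {..k'}"
  proof (intro equalityI subsetI)
    fix x assume "x \<in> d ` {..K}"
    then show "x \<in> c ` {..k} \<union> c' ` {..k'}"
      by (auto simp: d_def K_def)
  next
    fix x assume "x \<in> c ` {..k} \<union> c' ` {..k'}"
    then consider m where "m \<le> k" "x = c m" | m where "m \<le> k'" "x = c' m"
      by blast
    then show "x \<in> d ` {..K}"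
    proof cases
      case 1
      then show ?thesis using d_c[of m] by (intro image_eqI[of _ d m]) (auto simp: K_def)
    next
      case 2
      then show ?thesis using d_c'[of m] by (intro image_eqI[of _ d "m + s"]) (auto simp: K_def)
    qed
  qed
  ultimately show ?thesis
    unfolding stc_def by blast
qed

lemma stc_Un:
  assumes gp: "geom_proper A" and "stc A C" "stc A D" "C \<inter> D \<noteq> {}"
  shows "stc A (C \<union> D)"
proof -
  obtain c k c' k' where c: "stc_seq A c k" "C = c ` {..k}" and c': "stc_seq A c' k'" "D = c' ` {..k'}"
    using assms unfolding stc_def by auto
  moreover obtain x where "x \<in> C" "x \<in> D"
    using assms(4) by blast
  ultimately obtain i j where ij: "i \<le> k" "j \<le> k'" "c i = c' j"
    by auto
  show ?thesis
  proof (cases "j \<le> i")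
    case True
    then show ?thesis using stc_seq_merge[OF gp c(1) c'(1) True ij] c c' by simp
  next
    case False
    then show ?thesis using stc_seq_merge[OF gp c'(1) c(1) _ ij(2,1) ij(3)[symmetric]] c c'
      by (simp add: Un_commute)
  qed
qed

lemma stc_subset_nonisolated: "stc A C \<Longrightarrow> C \<subseteq> {a \<in> A. \<not> isolated A a}"
  unfolding stc_def stc_seq_def by auto

lemma stc_singleton: "a \<in> A \<Longrightarrow> \<not> isolated A a \<Longrightarrow> stc A {a}"
  unfolding stc_def stc_seq_def by (intro exI[of _ "\<lambda>_. a"] exI[of _ 0]) auto

lemma maximal_stc_eq:
  assumes "geom_proper A" "maximal_stc A C" "maximal_stc A D" "C \<inter> D \<noteq> {}"
  shows "C = D"
proof -
  have "stc A (C \<union> D)"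
    using stc_Un assms unfolding maximal_stc_def by blast
  then show ?thesis
    using assms(2,3) unfolding maximal_stc_def by blast
qed

lemma ex_maximal_stc:
  assumes "finite A" "a \<in> A" "\<not> isolated A a"
  shows "\<exists>C. maximal_stc A C \<and> a \<in> C"
proof -
  have "finite {D. stc A D \<and> a \<in> D}"
    by (rule finite_subset[of _ "Pow A"]) (use stc_subset_nonisolated assms(1) in auto)
  then obtain C where "C \<in> {D. stc A D \<and> a \<in> D}"
    and "\<forall>D\<in>{D. stc A D \<and> a \<in> D}. C \<subseteq> D \<longrightarrow> C = D"
    using finite_has_maximal[of "{D. stc A D \<and> a \<in> D}"] stc_singleton[OF assms(2,3)] by blast
  then show ?thesis
    unfolding maximal_stc_def by auto
qed

theorem proposition4p1:
  fixes A :: "(real \<Rightarrow> real) set"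
  assumes "finite A"
    and "\<forall>a\<in>A. positive_bump a"
    and "geom_proper A"
  shows "partition_on {a \<in> A. \<not> isolated A a} {C. maximal_stc A C}"
proof (rule partition_onI)
  show "\<Union> {C. maximal_stc A C} = {a \<in> A. \<not> isolated A a}"
    using ex_maximal_stc[OF assms(1)] stc_subset_nonisolated
    unfolding maximal_stc_def by blast
  show "disjnt C D" if "C \<in> {C. maximal_stc A C}" "D \<in> {C. maximal_stc A C}" "C \<noteq> D" for C D
    using maximal_stc_eq[OF assms(3)] that unfolding disjnt_def by blast
  show "{} \<notin> {C. maximal_stc A C}"
    unfolding maximal_stc_def stc_def by auto
qed

end
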